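(* Let $A$ be a compact Hausdorff topological algebra. Then $A$ is simple if and only if $\Delta_A=\{(a,a)\mid a\in A\}$ and $A\times A$ are the only closed congruences on $A$.
   Context: A topological algebra is an algebra (a set with finitary operations of a fixed type) equipped with a topology such that every operation is continuous. A congruence on $A$ is an equivalence relation on $A$ that is a subalgebra of $A\times A$; it is closed if it is closed in the product space $A\times A$. A Hausdorff topological algebra $A$ is called simple if every non-constant continuous homomorphism from $A$ into any Hausdorff topological algebra of the same type is injective. *)

theory Defs
  imports "HOL-Analysis.Analysis"
begin

text \<open>A type (signature) is given by an arity function ar on operation symbols 'f.  Tuples are represented as lists of length ar f; the product space is
  product_topology over the index set {..<ar f}.\<close>

definition top_algebra :: "('f \<Rightarrow> nat) \<Rightarrow> 'a topology \<Rightarrow> ('f \<Rightarrow> 'a list \<Rightarrow> 'a) \<Rightarrow> bool" where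
  "top_algebra ar T F \<longleftrightarrow>
     (\<forall>f. continuous_map (product_topology (\<lambda>_. T) {..<ar f}) T
            (\<lambda>x. F f (map x [0..<ar f])))"

definition congruence_alg :: "('f \<Rightarrow> nat) \<Rightarrow> 'a topology \<Rightarrow> ('f \<Rightarrow> 'a list \<Rightarrow> 'a) \<Rightarrow> ('a \<times> 'a) set \<Rightarrow> bool" where
  "congruence_alg ar T F \<theta> \<longleftrightarrow>
     equiv (topspace T) \<theta> \<and>
     (\<forall>f xs ys. length xs = ar f \<and> length ys = ar f \<and>
        set xs \<subseteq> topspace T \<and> set ys \<subseteq> topspace T \<and>
        list_all2 (\<lambda>x y. (x, y) \<in> \<theta>) xs ys \<longrightarrow> (F f xs, F f ys) \<in> \<theta>)"

definition closed_congruence :: "('f \<Rightarrow> nat) \<Rightarrow> 'a topology \<Rightarrow> ('f \<Rightarrow> 'a list \<Rightarrow> 'a) \<Rightarrow> ('a \<times> 'a) set \<Rightarrow> bool" where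
  "closed_congruence ar T F \<theta> \<longleftrightarrow>
     congruence_alg ar T F \<theta> \<and> closedin (prod_topology T T) \<theta>"

definition alg_hom :: "('f \<Rightarrow> nat) \<Rightarrow> 'a topology \<Rightarrow> ('f \<Rightarrow> 'a list \<Rightarrow> 'a) \<Rightarrow>
     'b topology \<Rightarrow> ('f \<Rightarrow> 'b list \<Rightarrow> 'b) \<Rightarrow> ('a \<Rightarrow> 'b) \<Rightarrow> bool" where
  "alg_hom ar T F U G h \<longleftrightarrow>
     h \<in> topspace T \<rightarrow> topspace U \<and>
     (\<forall>f xs. length xs = ar f \<and> set xs \<subseteq> topspace T \<longrightarrow>
        h (F f xs) = G f (map h xs))"

text \<open>Simplicity, with codomain algebras ranging over all Hausdorff topological algebras
  of the same type whose underlying type is 'b (HOL cannot quantify over types inside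
  a formula).\<close>

definition simple_alg :: "'b itself \<Rightarrow> ('f \<Rightarrow> nat) \<Rightarrow> 'a topology \<Rightarrow> ('f \<Rightarrow> 'a list \<Rightarrow> 'a) \<Rightarrow> bool" where
  "simple_alg _ ar T F \<longleftrightarrow>
     top_algebra ar T F \<and> Hausdorff_space T \<and>
     (\<forall>(U :: 'b topology) G h.
        top_algebra ar U G \<and> Hausdorff_space U \<and>
        alg_hom ar T F U G h \<and> continuous_map T U h \<and>
        (\<exists>x\<in>topspace T. \<exists>y\<in>topspace T. h x \<noteq> h y)
        \<longrightarrow> inj_on h (topspace T))"

end

theory Submission
  imports Defs
begin

text \<open>The kernel of a continuous homomorphism into a Hausdorff algebra is a closed congruence,
  and the homomorphism is non-constant, resp. injective, exactly when its kernel is not all of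
  \<open>A \<times> A\<close>, resp. is the diagonal; this gives one direction without compactness. Conversely, a
  closed congruence \<open>\<theta>\<close> of a compact Hausdorff algebra is the kernel of the projection onto the
  quotient space \<open>A/\<theta>\<close>. Compactness makes this quotient Hausdorff and makes the finite powers
  of the projection quotient maps, so the induced operations on \<open>A/\<theta>\<close> are continuous and the
  projection is a homomorphism of Hausdorff topological algebras.\<close>

definition quotient_topology :: "'a topology \<Rightarrow> ('a \<Rightarrow> 'b) \<Rightarrow> 'b topology" where
  "quotient_topology X q =
     topology (\<lambda>V. V \<subseteq> q ` topspace X \<and> openin X {x \<in> topspace X. q x \<in> V})"

lemma istopology_quotient:
  "istopology (\<lambda>V. V \<subseteq> q ` topspace X \<and> openin X {x \<in> topspace X. q x \<in> V})"
proof -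
  have "{x \<in> topspace X. q x \<in> S \<inter> T} = {x \<in> topspace X. q x \<in> S} \<inter> {x \<in> topspace X. q x \<in> T}"
    for S T by blast
  moreover have "{x \<in> topspace X. q x \<in> \<Union>K} = (\<Union>V\<in>K. {x \<in> topspace X. q x \<in> V})" for K
    by blast
  ultimately show ?thesis
    unfolding istopology_def by (auto intro!: openin_Union)
qed

lemma openin_quotient_topology:
  "openin (quotient_topology X q) V \<longleftrightarrow>
     V \<subseteq> q ` topspace X \<and> openin X {x \<in> topspace X. q x \<in> V}"
  unfolding quotient_topology_def topology_inverse'[OF istopology_quotient] ..

lemma topspace_quotient_topology: "topspace (quotient_topology X q) = q ` topspace X"
proof
  show "topspace (quotient_topology X q) \<subseteq> q ` topspace X"
    unfolding topspace_def openin_quotient_topology by blast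
  have "{x \<in> topspace X. q x \<in> q ` topspace X} = topspace X"
    by auto
  then have "openin (quotient_topology X q) (q ` topspace X)"
    unfolding openin_quotient_topology by auto
  then show "q ` topspace X \<subseteq> topspace (quotient_topology X q)"
    by (rule openin_subset)
qed

lemma quotient_map_quotient_topology: "quotient_map X (quotient_topology X q) q"
  unfolding quotient_map_def topspace_quotient_topology openin_quotient_topology by auto

lemma closedin_Image_compact:
  assumes "compact_space X" "compact_space Y" "Hausdorff_space Y"
    and R: "closedin (prod_topology X Y) R" and K: "closedin X K"
  shows "closedin Y (R `` K)"
proof -
  have "closedin (prod_topology X Y) (R \<inter> K \<times> topspace Y)"
    using R K by (simp add: closedin_Int closedin_prod_Times_iff)
  then have "compactin (prod_topology X Y) (R \<inter> K \<times> topspace Y)"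
    by (simp add: assms closedin_compact_space compact_space_prod_topology)
  then have "compactin Y (snd ` (R \<inter> K \<times> topspace Y))"
    using image_compactin continuous_map_snd by blast
  moreover have "snd ` (R \<inter> K \<times> topspace Y) = R `` K"
    using closedin_subset[OF R] by force
  ultimately show ?thesis
    using compactin_imp_closedin \<open>Hausdorff_space Y\<close> by metis
qed

text \<open>The projection is closed because saturations of closed sets are closed, and the closed
  continuous image of a normal Hausdorff space is Hausdorff.\<close>

lemma closed_map_equiv_class_projection:
  assumes eq: "equiv (topspace X) \<theta>" and cl: "closedin (prod_topology X X) \<theta>"
    and "compact_space X" "Hausdorff_space X"
  shows "closed_map X (quotient_topology X (\<lambda>x. \<theta>``{x})) (\<lambda>x. \<theta>``{x})"
  unfolding closed_map_def
proof (intro allI impI)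
  fix K assume K: "closedin X K"
  have "{x \<in> topspace X. \<theta>``{x} \<in> (\<lambda>x. \<theta>``{x}) ` K} = \<theta>``K"
    using closedin_subset[OF K] eq_equiv_class_iff[OF eq] equiv_type[OF eq] by blast
  moreover have "closedin X (\<theta>``K)"
    using closedin_Image_compact assms K by blast
  moreover have "(\<lambda>x. \<theta>``{x}) ` K \<subseteq> topspace (quotient_topology X (\<lambda>x. \<theta>``{x}))"
    using closedin_subset[OF K] by (auto simp: topspace_quotient_topology)
  ultimately show "closedin (quotient_topology X (\<lambda>x. \<theta>``{x})) ((\<lambda>x. \<theta>``{x}) ` K)"
    using quotient_map_closedin[THEN iffD1, OF quotient_map_quotient_topology, THEN conjunct2,
        rule_format, of "(\<lambda>x. \<theta>``{x}) ` K" X "\<lambda>x. \<theta>``{x}"]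
    by metis
qed

lemma Hausdorff_space_quotient_closed_equiv:
  assumes "equiv (topspace X) \<theta>" "closedin (prod_topology X X) \<theta>"
    and "compact_space X" "Hausdorff_space X"
  shows "Hausdorff_space (quotient_topology X (\<lambda>x. \<theta>``{x}))"
proof -
  let ?q = "\<lambda>x. \<theta>``{x}"
  have "quotient_map X (quotient_topology X ?q) ?q"
    by (rule quotient_map_quotient_topology)
  moreover have "normal_space X"
    using assms compact_Hausdorff_or_regular_imp_normal_space by blast
  ultimately show ?thesis
    using normal_Hausdorff_space_closed_continuous_map_image[OF _ \<open>Hausdorff_space X\<close>
        closed_map_equiv_class_projection[OF assms] quotient_imp_continuous_map
        quotient_imp_surjective_map]
    by blast
qed

lemma quotient_map_product_power:
  assumes f: "continuous_map X Y f" and surj: "f ` topspace X = topspace Y"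
    and "compact_space X" "Hausdorff_space Y"
  shows "quotient_map (product_topology (\<lambda>_. X) I) (product_topology (\<lambda>_. Y) I)
           (\<lambda>x. restrict (f \<circ> x) I)"
proof (rule continuous_imp_quotient_map)
  show "continuous_map (product_topology (\<lambda>_. X) I) (product_topology (\<lambda>_. Y) I)
          (\<lambda>x. restrict (f \<circ> x) I)"
    unfolding continuous_map_componentwise
  proof (intro conjI ballI)
    fix k assume k: "k \<in> I"
    have "continuous_map (product_topology (\<lambda>_. X) I) Y (f \<circ> (\<lambda>x. x k))"
      using continuous_map_product_projection[OF k] f by (rule continuous_map_compose)
    then show "continuous_map (product_topology (\<lambda>_. X) I) Y (\<lambda>x. restrict (f \<circ> x) I k)"
      by (rule continuous_map_eq) (use k in simp)
  qed auto
  show "(\<lambda>x. restrict (f \<circ> x) I) ` topspace (product_topology (\<lambda>_. X) I)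
          = topspace (product_topology (\<lambda>_. Y) I)"
  proof (intro subset_antisym subsetI)
    fix y assume y: "y \<in> topspace (product_topology (\<lambda>_. Y) I)"
    define x where "x = restrict (\<lambda>i. SOME z. z \<in> topspace X \<and> f z = y i) I"
    have preimage: "\<exists>z. z \<in> topspace X \<and> f z = y i" if "i \<in> I" for i
      using y that surj by (force simp: PiE_iff)
    have "x i \<in> topspace X \<and> f (x i) = y i" if "i \<in> I" for i
      using someI_ex[OF preimage[OF that]] that unfolding x_def by simp
    then have "x \<in> topspace (product_topology (\<lambda>_. X) I)" "restrict (f \<circ> x) I = y"
      using y by (auto simp: x_def PiE_iff extensional_def)
    then show "y \<in> (\<lambda>x. restrict (f \<circ> x) I) ` topspace (product_topology (\<lambda>_. X) I)"
      by blast
  qed (use surj in \<open>auto simp: PiE_iff\<close>)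
qed (use assms in \<open>simp_all add: compact_space_product_topology Hausdorff_space_product_topology\<close>)

lemma top_algebra_operation_closed:
  assumes "top_algebra ar T F" "length xs = ar f" "set xs \<subseteq> topspace T"
  shows "F f xs \<in> topspace T"
proof -
  define x where "x i = (if i < ar f then xs ! i else undefined)" for i
  have "x \<in> topspace (product_topology (\<lambda>_. T) {..<ar f})"
    using assms(2,3) by (auto simp: x_def PiE_iff extensional_def)
  moreover have "map x [0..<ar f] = xs"
    using assms(2) by (intro nth_equalityI) (auto simp: x_def)
  ultimately show ?thesis
    using assms(1) continuous_map_image_subset_topspace unfolding top_algebra_def by fastforce
qed

lemma top_algebra_image:
  assumes T: "top_algebra ar T F" "compact_space T" and "Hausdorff_space U"
    and h: "continuous_map T U h" "h ` topspace T = topspace U" "alg_hom ar T F U G h"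
  shows "top_algebra ar U G"
  unfolding top_algebra_def
proof
  fix f
  let ?P = "\<lambda>Z. product_topology (\<lambda>_. Z) {..<ar f}"
  let ?hpow = "\<lambda>x. restrict (h \<circ> x) {..<ar f}"
  have "continuous_map (?P T) U (h \<circ> (\<lambda>x. F f (map x [0..<ar f])))"
    using T h unfolding top_algebra_def by (blast intro: continuous_map_compose)
  then have "continuous_map (?P T) U ((\<lambda>y. G f (map y [0..<ar f])) \<circ> ?hpow)"
  proof (rule continuous_map_eq)
    fix x assume "x \<in> topspace (?P T)"
    then have "set (map x [0..<ar f]) \<subseteq> topspace T"
      by (auto simp: PiE_iff)
    then have "h (F f (map x [0..<ar f])) = G f (map h (map x [0..<ar f]))"
      using h(3) unfolding alg_hom_def by simp
    also have "map h (map x [0..<ar f]) = map (?hpow x) [0..<ar f]"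
      by simp
    finally show "(h \<circ> (\<lambda>x. F f (map x [0..<ar f]))) x = ((\<lambda>y. G f (map y [0..<ar f])) \<circ> ?hpow) x"
      by simp
  qed
  moreover have "quotient_map (?P T) (?P U) ?hpow"
    using quotient_map_product_power h(1,2) assms(2,3) by blast
  ultimately show "continuous_map (?P U) U (\<lambda>y. G f (map y [0..<ar f]))"
    using continuous_compose_quotient_map by blast
qed

definition kernel_rel :: "'a topology \<Rightarrow> ('a \<Rightarrow> 'b) \<Rightarrow> ('a \<times> 'a) set" where
  "kernel_rel T h = {(x, y) \<in> topspace T \<times> topspace T. h x = h y}"

lemma inj_on_iff_kernel_rel: "inj_on h (topspace T) \<longleftrightarrow> kernel_rel T h = Id_on (topspace T)"
  unfolding kernel_rel_def inj_on_def by auto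

lemma kernel_rel_eq_Times_iff:
  "kernel_rel T h = topspace T \<times> topspace T \<longleftrightarrow> (\<forall>x\<in>topspace T. \<forall>y\<in>topspace T. h x = h y)"
  unfolding kernel_rel_def by auto

lemma kernel_rel_equiv_class:
  assumes "equiv (topspace T) \<theta>"
  shows "kernel_rel T (\<lambda>x. \<theta>``{x}) = \<theta>"
  using eq_equiv_class_iff[OF assms] equiv_type[OF assms] unfolding kernel_rel_def by blast

lemma closed_congruence_kernel_rel:
  assumes T: "top_algebra ar T F" and "Hausdorff_space U"
    and h: "alg_hom ar T F U G h" "continuous_map T U h"
  shows "closed_congruence ar T F (kernel_rel T h)"
  unfolding closed_congruence_def congruence_alg_def
proof (intro conjI allI impI)
  show "equiv (topspace T) (kernel_rel T h)"
    unfolding kernel_rel_def by (intro equivI refl_onI symI transI) auto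
  fix f xs ys
  assume a: "length xs = ar f \<and> length ys = ar f \<and> set xs \<subseteq> topspace T \<and>
    set ys \<subseteq> topspace T \<and> list_all2 (\<lambda>x y. (x, y) \<in> kernel_rel T h) xs ys"
  then have "map h xs = map h ys"
    by (intro nth_equalityI) (auto simp: kernel_rel_def list_all2_conv_all_nth)
  moreover have "F f xs \<in> topspace T" "F f ys \<in> topspace T"
    using a top_algebra_operation_closed[OF T] by blast+
  ultimately show "(F f xs, F f ys) \<in> kernel_rel T h"
    using a h(1) unfolding alg_hom_def kernel_rel_def by simp
next
  have "closedin (prod_topology T T) {z \<in> topspace (prod_topology T T). h (fst z) = h (snd z)}"
    using closedin_continuous_maps_eq \<open>Hausdorff_space U\<close>
      continuous_map_compose[OF continuous_map_fst h(2)] continuous_map_compose[OF continuous_map_snd h(2)]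
    unfolding o_def by blast
  moreover have "kernel_rel T h = {z \<in> topspace (prod_topology T T). h (fst z) = h (snd z)}"
    unfolding kernel_rel_def by auto
  ultimately show "closedin (prod_topology T T) (kernel_rel T h)"
    by simp
qed

text \<open>The operations act on arbitrary representatives; for a congruence the choice is irrelevant.\<close>

definition quotient_ops :: "('a \<times> 'a) set \<Rightarrow> ('f \<Rightarrow> 'a list \<Rightarrow> 'a) \<Rightarrow> 'f \<Rightarrow> 'a set list \<Rightarrow> 'a set" where
  "quotient_ops \<theta> F f cs = \<theta>``{F f (map (\<lambda>c. SOME x. x \<in> c) cs)}"

lemma alg_hom_equiv_class_projection:
  assumes T: "top_algebra ar T F" and \<theta>: "congruence_alg ar T F \<theta>"
  shows "alg_hom ar T F (quotient_topology T (\<lambda>x. \<theta>``{x})) (quotient_ops \<theta> F) (\<lambda>x. \<theta>``{x})"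
  unfolding alg_hom_def
proof (intro conjI allI impI)
  have eq: "equiv (topspace T) \<theta>"
    using \<theta> unfolding congruence_alg_def by blast
  show "(\<lambda>x. \<theta>``{x}) \<in> topspace T \<rightarrow> topspace (quotient_topology T (\<lambda>x. \<theta>``{x}))"
    by (simp add: topspace_quotient_topology)
  fix f xs assume xs: "length xs = ar f \<and> set xs \<subseteq> topspace T"
  define reps where "reps = map (\<lambda>c. SOME x. x \<in> c) (map (\<lambda>x. \<theta>``{x}) xs)"
  have rep: "(SOME y. (x, y) \<in> \<theta>, x) \<in> \<theta>" if "x \<in> topspace T" for x
  proof -
    have "(x, SOME y. (x, y) \<in> \<theta>) \<in> \<theta>"
      using someI[of "\<lambda>y. (x, y) \<in> \<theta>"] equiv_class_self[OF eq that] by blast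
    then show ?thesis
      using eq by (blast elim: equivE dest: symD)
  qed
  have reps: "list_all2 (\<lambda>x y. (x, y) \<in> \<theta>) reps xs"
    using xs by (auto simp: reps_def list_all2_conv_all_nth intro!: rep)
  then have "set reps \<subseteq> topspace T"
    using equiv_type[OF eq] by (fastforce simp: list_all2_conv_all_nth in_set_conv_nth)
  then have "(F f reps, F f xs) \<in> \<theta>"
    using \<theta> xs reps unfolding congruence_alg_def by (simp add: reps_def)
  then show "\<theta>``{F f xs} = quotient_ops \<theta> F f (map (\<lambda>x. \<theta>``{x}) xs)"
    unfolding quotient_ops_def reps_def[symmetric] by (metis equiv_class_eq[OF eq])
qed

lemma simple_alg_if_closed_congruences_trivial:
  assumes "top_algebra ar T F" "Hausdorff_space T"
    and trivial: "\<forall>\<theta>. closed_congruence ar T F \<theta> \<longrightarrow>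
                   \<theta> = Id_on (topspace T) \<or> \<theta> = topspace T \<times> topspace T"
  shows "simple_alg TYPE('b) ar T F"
  unfolding simple_alg_def
proof (intro conjI assms allI impI)
  fix U :: "'b topology" and G h
  assume h: "top_algebra ar U G \<and> Hausdorff_space U \<and> alg_hom ar T F U G h \<and>
    continuous_map T U h \<and> (\<exists>x\<in>topspace T. \<exists>y\<in>topspace T. h x \<noteq> h y)"
  then have "kernel_rel T h = Id_on (topspace T) \<or> kernel_rel T h = topspace T \<times> topspace T"
    using trivial closed_congruence_kernel_rel[OF assms(1)] by blast
  then show "inj_on h (topspace T)"
    unfolding inj_on_iff_kernel_rel kernel_rel_eq_Times_iff using h by blast
qed

lemma closed_congruence_trivial_if_simple_alg:
  fixes T :: "'a topology"
  assumes simple: "simple_alg TYPE('a set) ar T F" and "compact_space T"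
    and \<theta>: "closed_congruence ar T F \<theta>"
  shows "\<theta> = Id_on (topspace T) \<or> \<theta> = topspace T \<times> topspace T"
proof -
  let ?q = "\<lambda>x. \<theta>``{x}"
  let ?Q = "quotient_topology T ?q"
  have T: "top_algebra ar T F" "Hausdorff_space T"
    using simple unfolding simple_alg_def by blast+
  have cong: "congruence_alg ar T F \<theta>" and eq: "equiv (topspace T) \<theta>"
    and closed: "closedin (prod_topology T T) \<theta>"
    using \<theta> unfolding closed_congruence_def congruence_alg_def by blast+
  have Q: "Hausdorff_space ?Q"
    using Hausdorff_space_quotient_closed_equiv eq closed \<open>compact_space T\<close> T(2) by blast
  have q: "continuous_map T ?Q ?q" "?q ` topspace T = topspace ?Q"
    by (simp_all add: quotient_imp_continuous_map quotient_map_quotient_topology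
        topspace_quotient_topology)
  have hom: "alg_hom ar T F ?Q (quotient_ops \<theta> F) ?q"
    using alg_hom_equiv_class_projection[OF T(1) cong] .
  then have "top_algebra ar ?Q (quotient_ops \<theta> F)"
    using top_algebra_image[OF T(1) \<open>compact_space T\<close> Q q] by blast
  then have "inj_on ?q (topspace T) \<or> (\<forall>x\<in>topspace T. \<forall>y\<in>topspace T. ?q x = ?q y)"
    using simple[unfolded simple_alg_def, THEN conjunct2, THEN conjunct2, rule_format,
        of ?Q "quotient_ops \<theta> F" ?q] Q q(1) hom
    by blast
  then show ?thesis
    unfolding inj_on_iff_kernel_rel kernel_rel_eq_Times_iff[symmetric] kernel_rel_equiv_class[OF eq] .
qed

theorem proposition4p1:
  fixes ar :: "'f \<Rightarrow> nat" and T :: "'a topology" and F :: "'f \<Rightarrow> 'a list \<Rightarrow> 'a"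
  assumes "top_algebra ar T F" and "Hausdorff_space T" and "compact_space T"
  shows "(simple_alg TYPE('a set) ar T F \<longleftrightarrow>
           (\<forall>\<theta>. closed_congruence ar T F \<theta> \<longrightarrow>
                \<theta> = Id_on (topspace T) \<or> \<theta> = topspace T \<times> topspace T))
       \<and> ((\<forall>\<theta>. closed_congruence ar T F \<theta> \<longrightarrow>
                \<theta> = Id_on (topspace T) \<or> \<theta> = topspace T \<times> topspace T)
           \<longrightarrow> simple_alg TYPE('b) ar T F)"
proof -
  let ?trivial = "\<forall>\<theta>. closed_congruence ar T F \<theta> \<longrightarrow>
                    \<theta> = Id_on (topspace T) \<or> \<theta> = topspace T \<times> topspace T"
  have "simple_alg TYPE('a set) ar T F \<longrightarrow> ?trivial"
    using closed_congruence_trivial_if_simple_alg \<open>compact_space T\<close> by blast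
  moreover have "?trivial \<longrightarrow> simple_alg TYPE('a set) ar T F"
    using simple_alg_if_closed_congruences_trivial[OF assms(1,2)] by blast
  moreover have "?trivial \<longrightarrow> simple_alg TYPE('b) ar T F"
    using simple_alg_if_closed_congruences_trivial[OF assms(1,2)] by blast
  ultimately show ?thesis
    by blast
qed

end
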